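(* Let $A$ be a finite alphabet with $|A|\ge 2$ and $k \ge 1$. Let $\mathcal{R}$ be the set of reduced words over $\tilde A$ and $\mathcal{R}_{\le n}$ those of length at most $n$. Let $\mathbb{P}_n$ be the uniform probability law on $\mathcal{R}_{\le n}^k$. Let $T$ be the set of subgroups of $F(A)$ of the form $\langle\vec h\rangle$ with $\vec h \in \mathcal{R}^k$, let $T_n = \{\langle \vec h\rangle \mid \vec h\in \mathcal{R}_{\le n}^k\}$, and let $\mathbb{Q}_n$ be the uniform probability law on $T_n$. Let $X\subseteq T$ and $Y = \{\vec h\in\mathcal{R}^k \mid \langle\vec h\rangle\in X\}$. Then: if $\lim_n\mathbb{P}_n(Y) = 0$, then $\lim_n \mathbb{Q}_n(X) = 0$; if $\mathbb{P}_n(Y) = \mathcal{O}(e^{-cn})$ for some $c>0$, then $\mathbb{Q}_n(X) = \mathcal{O}(e^{-c'n})$ for some $c'>0$. Likewise, if $\lim_n \mathbb{P}_n(Y) = 1$ then $\lim_n\mathbb{Q}_n(X) = 1$, and if $1-\mathbb{P}_n(Y) = \mathcal{O}(e^{-cn})$ for some $c>0$ then $1-\mathbb{Q}_n(X) = \mathcal{O}(e^{-c'n})$ for some $c'>0$.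
   Context: $F(A)$ is the free group on $A$, identified with the set of reduced words over $\tilde A = A\cup\bar A$ ($\bar a$ representing $a^{-1}$); a word is reduced if it has no factor $a\bar a$ or $\bar a a$. For a tuple $\vec h = (h_1,\dots,h_k)$ of elements of $F(A)$, $\langle\vec h\rangle$ is the subgroup generated by $h_1,\dots,h_k$. *)

theory Defs
  imports "HOL-Algebra.Generated_Groups" "HOL-Library.Landau_Symbols" Complex_Main
begin

text \<open>Letters of the extended alphabet: (a, True) stands for a, (a, False) for its
  formal inverse a-bar.\<close>
type_synonym 'a letter = "'a \<times> bool"

definition inv_letter :: "'a letter \<Rightarrow> 'a letter" where
  "inv_letter x = (fst x, \<not> snd x)"

definition reduced :: "'a set \<Rightarrow> 'a letter list \<Rightarrow> bool" where
  "reduced A w \<longleftrightarrow> fst ` set w \<subseteq> A \<and>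
     (\<forall>i. Suc i < length w \<longrightarrow> w ! Suc i \<noteq> inv_letter (w ! i))"

definition reduced_words :: "'a set \<Rightarrow> 'a letter list set" where
  "reduced_words A = {w. reduced A w}"

definition reduced_words_le :: "'a set \<Rightarrow> nat \<Rightarrow> 'a letter list set" where
  "reduced_words_le A n = {w. reduced A w \<and> length w \<le> n}"

fun cancel :: "'a letter \<Rightarrow> 'a letter list \<Rightarrow> 'a letter list" where
  "cancel x [] = [x]"
| "cancel x (y # ys) = (if y = inv_letter x then ys else x # y # ys)"

definition reduce :: "'a letter list \<Rightarrow> 'a letter list" where
  "reduce w = foldr cancel w []"

definition free_group :: "'a set \<Rightarrow> 'a letter list monoid" where
  "free_group A = \<lparr>carrier = reduced_words A, mult = (\<lambda>u v. reduce (u @ v)), one = []\<rparr>"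

definition gen_sub :: "'a set \<Rightarrow> 'a letter list list \<Rightarrow> 'a letter list set" where
  "gen_sub A hs = generate (free_group A) (set hs)"

definition tuples :: "'a set \<Rightarrow> nat \<Rightarrow> 'a letter list list set" where
  "tuples A k = {hs. length hs = k \<and> set hs \<subseteq> reduced_words A}"

definition tuples_le :: "'a set \<Rightarrow> nat \<Rightarrow> nat \<Rightarrow> 'a letter list list set" where
  "tuples_le A k n = {hs. length hs = k \<and> set hs \<subseteq> reduced_words_le A n}"

definition subgroups_T :: "'a set \<Rightarrow> nat \<Rightarrow> 'a letter list set set" where
  "subgroups_T A k = gen_sub A ` tuples A k"

definition subgroups_T_le :: "'a set \<Rightarrow> nat \<Rightarrow> nat \<Rightarrow> 'a letter list set set" where
  "subgroups_T_le A k n = gen_sub A ` tuples_le A k n"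

definition Pn :: "'a set \<Rightarrow> nat \<Rightarrow> nat \<Rightarrow> 'a letter list list set \<Rightarrow> real" where
  "Pn A k n Y = real (card (Y \<inter> tuples_le A k n)) / real (card (tuples_le A k n))"

definition Qn :: "'a set \<Rightarrow> nat \<Rightarrow> nat \<Rightarrow> 'a letter list set set \<Rightarrow> real" where
  "Qn A k n X = real (card (X \<inter> subgroups_T_le A k n)) / real (card (subgroups_T_le A k n))"

end

theory Submission
  imports Defs
begin

text \<open>The map \<open>hs \<mapsto> \<langle>hs\<rangle>\<close> sends the tuples of reduced words of length at most n onto
  T_n, so Q_n(X) is at most P_n(Y) times the ratio between the number of tuples and |T_n|, and the
  same bound for the complement of X handles 1 - P_n and 1 - Q_n. It therefore suffices to show that
  T_n is at most a constant factor smaller than the set of tuples.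

  For this, fix letters a \<noteq> b and turn a k-tuple of reduced words h_j of length n - 2k - 2 into
  the tuple of words m_j p h_j q m_j, where the markers m_j are distinct positive words of length k
  and p, q are padding letters. Each of these words and each of their inverses is determined by its
  prefix of length k, so in a freely reduced product of them consecutive factors cancel in fewer
  than k letters. Hence the nontrivial elements of length at most n of the generated subgroup are
  exactly the generators and their inverses, the subgroup determines the tuple, and
  |T_n| \<ge> |R_{n-2k-2}|^k, which is within a constant factor of |R_{\<le>n}|^k.\<close>

section \<open>Free reduction\<close>

abbreviation freely_reduced :: "'a letter list \<Rightarrow> bool" where
  "freely_reduced \<equiv> successively (\<lambda>x y. y \<noteq> inv_letter x)"

lemma inv_letter_inv_letter [simp]: "inv_letter (inv_letter x) = x"
  by (simp add: inv_letter_def)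

lemma fst_inv_letter [simp]: "fst (inv_letter x) = fst x"
  by (simp add: inv_letter_def)

lemma snd_inv_letter [simp]: "snd (inv_letter x) \<longleftrightarrow> \<not> snd x"
  by (simp add: inv_letter_def)

lemma reduced_iff_freely_reduced: "reduced A w \<longleftrightarrow> fst ` set w \<subseteq> A \<and> freely_reduced w"
  by (simp add: reduced_def successively_conv_nth)

lemma cancel_conv: "cancel x w = (if w \<noteq> [] \<and> hd w = inv_letter x then tl w else x # w)"
  by (cases w) auto

lemma freely_reduced_cancel: "freely_reduced w \<Longrightarrow> freely_reduced (cancel x w)"
  by (cases w) (auto simp: successively_Cons)

lemma freely_reduced_foldr_cancel: "freely_reduced w \<Longrightarrow> freely_reduced (foldr cancel u w)"
  by (induction u) (auto intro: freely_reduced_cancel)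

lemma freely_reduced_reduce: "freely_reduced (reduce u)"
  unfolding reduce_def by (rule freely_reduced_foldr_cancel) simp

lemma set_cancel_subset: "set (cancel x w) \<subseteq> insert x (set w)"
  by (cases w) auto

lemma set_reduce_subset: "set (reduce u) \<subseteq> set u"
proof -
  have "set (foldr cancel u w) \<subseteq> set u \<union> set w" for w
    by (induction u) (use set_cancel_subset in fastforce)+
  then show ?thesis unfolding reduce_def by fastforce
qed

lemma reduce_eq_self: "freely_reduced w \<Longrightarrow> reduce w = w"
  unfolding reduce_def by (induction w) (auto simp: successively_Cons cancel_conv)

lemma reduce_append: "reduce (u @ v) = foldr cancel u (reduce v)"
  by (simp add: reduce_def)

lemma cancel_cancel_inv_letter: "freely_reduced w \<Longrightarrow> cancel x (cancel (inv_letter x) w) = w"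
  by (cases w) (auto simp: successively_Cons cancel_conv)

definition inv_word :: "'a letter list \<Rightarrow> 'a letter list" where
  "inv_word w = rev (map inv_letter w)"

lemma inv_word_inv_word [simp]: "inv_word (inv_word w) = w"
  by (simp add: inv_word_def rev_map comp_def)

lemma inv_word_Cons: "inv_word (x # w) = inv_word w @ [inv_letter x]"
  by (simp add: inv_word_def)

lemma inv_word_append: "inv_word (u @ v) = inv_word v @ inv_word u"
  by (simp add: inv_word_def)

lemma set_inv_word: "set (inv_word w) = inv_letter ` set w"
  by (simp add: inv_word_def)

lemma length_inv_word [simp]: "length (inv_word w) = length w"
  by (simp add: inv_word_def)

lemma inv_word_eq_iff [simp]: "inv_word u = inv_word v \<longleftrightarrow> u = v"
  by (metis inv_word_inv_word)

lemma freely_reduced_inv_word: "freely_reduced (inv_word w) \<longleftrightarrow> freely_reduced w"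
proof -
  have "successively (\<lambda>x y. inv_letter x \<noteq> inv_letter (inv_letter y)) w \<longleftrightarrow> freely_reduced w"
    by (rule successively_cong) (auto simp: inv_letter_def)
  then show ?thesis by (simp add: inv_word_def successively_map del: inv_letter_inv_letter)
qed

lemma foldr_cancel_inv_word:
  "freely_reduced w \<Longrightarrow> foldr cancel u (foldr cancel (inv_word u) w) = w"
proof (induction u arbitrary: w)
  case (Cons x u)
  have "foldr cancel (x # u) (foldr cancel (inv_word (x # u)) w)
      = cancel x (foldr cancel u (foldr cancel (inv_word u) (cancel (inv_letter x) w)))"
    by (simp add: inv_word_Cons)
  also have "\<dots> = cancel x (cancel (inv_letter x) w)"
    using Cons by (simp add: freely_reduced_cancel)
  also have "\<dots> = w" using Cons.prems by (rule cancel_cancel_inv_letter)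
  finally show ?case .
qed (simp add: inv_word_def)

lemma foldr_cancel_reduce: "freely_reduced w \<Longrightarrow> foldr cancel (reduce u) w = foldr cancel u w"
proof (induction u arbitrary: w)
  case (Cons x u)
  define r where "r = reduce u"
  have r: "freely_reduced r" "reduce (x # u) = cancel x r"
    by (simp add: r_def freely_reduced_reduce) (simp add: r_def reduce_def)
  show ?case
  proof (cases "r \<noteq> [] \<and> hd r = inv_letter x")
    case True
    then obtain r' where r': "r = inv_letter x # r'" by (cases r) auto
    have "foldr cancel (reduce (x # u)) w = foldr cancel r' w" using r r' by simp
    also have "\<dots> = cancel x (foldr cancel r w)"
      using r' Cons.prems by (simp add: cancel_cancel_inv_letter freely_reduced_foldr_cancel)
    finally show ?thesis using Cons r_def by simp
  next
    case False
    then have "cancel x r = x # r" by (auto simp: cancel_conv)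
    then show ?thesis using r Cons r_def by simp
  qed
qed (simp add: reduce_def)

lemma reduce_reduce_append: "reduce (reduce u @ v) = reduce (u @ v)"
  by (simp add: reduce_append foldr_cancel_reduce freely_reduced_reduce)

lemma reduce_append_reduce: "reduce (u @ reduce v) = reduce (u @ v)"
  by (simp add: reduce_append reduce_eq_self freely_reduced_reduce)

lemma carrier_free_group: "carrier (free_group A) = reduced_words A"
  by (simp add: free_group_def)

lemma mult_free_group: "u \<otimes>\<^bsub>free_group A\<^esub> v = reduce (u @ v)"
  by (simp add: free_group_def)

lemma one_free_group: "\<one>\<^bsub>free_group A\<^esub> = []"
  by (simp add: free_group_def)

lemma inv_free_group:
  assumes "h \<in> reduced_words A"
  shows "inv\<^bsub>free_group A\<^esub> h = inv_word h"
proof -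
  have h: "freely_reduced h" "fst ` set h \<subseteq> A"
    using assms by (auto simp: reduced_words_def reduced_iff_freely_reduced)
  have "reduce (h @ inv_word h) = foldr cancel h (foldr cancel (inv_word h) [])"
    by (simp add: reduce_def)
  then have cancel_right: "reduce (h @ inv_word h) = []"
    by (simp add: foldr_cancel_inv_word)
  have "reduce (inv_word h @ h) = foldr cancel (inv_word h) (foldr cancel (inv_word (inv_word h)) [])"
    by (simp add: reduce_def)
  then have cancel_left: "reduce (inv_word h @ h) = []"
    by (simp only: foldr_cancel_inv_word successively.simps)
  have inv_h: "inv_word h \<in> reduced_words A"
    using h by (auto simp: reduced_words_def reduced_iff_freely_reduced freely_reduced_inv_word set_inv_word)
  show ?thesis unfolding m_inv_def mult_free_group one_free_group carrier_free_group
  proof (rule the_equality)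
    fix y assume y: "y \<in> reduced_words A \<and> reduce (h @ y) = [] \<and> reduce (y @ h) = []"
    then have "freely_reduced y" by (simp add: reduced_words_def reduced_iff_freely_reduced)
    then have "y = foldr cancel (inv_word h) (foldr cancel h y)"
      by (simp add: foldr_cancel_inv_word[of y "inv_word h", simplified])
    also have "\<dots> = foldr cancel (inv_word h) (reduce (h @ y))"
      using \<open>freely_reduced y\<close> by (simp add: reduce_append reduce_eq_self)
    also have "\<dots> = reduce (inv_word h)" using y by (simp add: reduce_def[of "inv_word h"])
    also have "\<dots> = inv_word h" using h by (simp add: reduce_eq_self freely_reduced_inv_word)
    finally show "y = inv_word h" .
  qed (intro conjI inv_h cancel_left cancel_right)
qed

lemma generate_free_group_elem:
  assumes "G \<subseteq> reduced_words A" "w \<in> generate (free_group A) G"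
  shows "\<exists>\<sigma>. set \<sigma> \<subseteq> G \<union> inv_word ` G \<and> w = reduce (concat \<sigma>)"
  using assms(2)
proof (induction rule: generate.induct)
  case one
  show ?case by (rule exI[of _ "[]"]) (simp add: one_free_group reduce_def)
next
  case (incl h)
  then have "freely_reduced h"
    using assms(1) by (auto simp: reduced_words_def reduced_iff_freely_reduced)
  then show ?case using incl by (intro exI[of _ "[h]"]) (simp add: reduce_eq_self)
next
  case (inv h)
  then have "freely_reduced h" "inv\<^bsub>free_group A\<^esub> h = inv_word h"
    using assms(1) inv_free_group[of h A] by (auto simp: reduced_words_def reduced_iff_freely_reduced)
  then show ?case using inv
    by (intro exI[of _ "[inv_word h]"]) (auto simp: reduce_eq_self freely_reduced_inv_word)
next
  case (eng h1 h2)
  then obtain \<sigma>1 \<sigma>2 where "set \<sigma>1 \<subseteq> G \<union> inv_word ` G" "h1 = reduce (concat \<sigma>1)"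
    "set \<sigma>2 \<subseteq> G \<union> inv_word ` G" "h2 = reduce (concat \<sigma>2)" by blast
  then show ?case
    by (intro exI[of _ "\<sigma>1 @ \<sigma>2"]) (simp add: mult_free_group reduce_reduce_append reduce_append_reduce)
qed

section \<open>Products of prefix-marked words\<close>

fun cancel_word :: "'a letter list \<Rightarrow> 'a letter list list \<Rightarrow> 'a letter list list" where
  "cancel_word x [] = [x]"
| "cancel_word x (y # ys) = (if y = inv_word x then ys else x # y # ys)"

definition reduce_seq :: "'a letter list list \<Rightarrow> 'a letter list list" where
  "reduce_seq s = foldr cancel_word s []"

abbreviation freely_reduced_seq :: "'a letter list list \<Rightarrow> bool" where
  "freely_reduced_seq \<equiv> successively (\<lambda>x y. y \<noteq> inv_word x)"

lemma freely_reduced_seq_reduce_seq: "freely_reduced_seq (reduce_seq s)"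
proof -
  have "freely_reduced_seq t \<Longrightarrow> freely_reduced_seq (cancel_word x t)" for x t
    by (cases t) (auto simp: successively_Cons)
  then show ?thesis unfolding reduce_seq_def by (induction s) auto
qed

lemma set_reduce_seq_subset: "set (reduce_seq s) \<subseteq> set s"
proof -
  have "set (cancel_word x t) \<subseteq> insert x (set t)" for x t by (cases t) auto
  then show ?thesis unfolding reduce_seq_def by (induction s) fastforce+
qed

lemma reduce_concat_cancel_word: "reduce (concat (cancel_word x t)) = reduce (x @ concat t)"
proof (cases t)
  case (Cons y ys)
  show ?thesis
  proof (cases "y = inv_word x")
    case True
    have "reduce (x @ concat t) = foldr cancel x (foldr cancel (inv_word x) (reduce (concat ys)))"
      using Cons True by (simp add: reduce_append)
    also have "\<dots> = reduce (concat ys)" by (rule foldr_cancel_inv_word) (rule freely_reduced_reduce)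
    finally show ?thesis using Cons True by simp
  qed (use Cons in simp)
qed simp

lemma reduce_concat_reduce_seq: "reduce (concat (reduce_seq s)) = reduce (concat s)"
proof (induction s)
  case (Cons x s)
  have "reduce (concat (reduce_seq (x # s))) = reduce (x @ concat (reduce_seq s))"
    by (simp add: reduce_seq_def reduce_concat_cancel_word)
  also have "\<dots> = foldr cancel x (reduce (concat s))" using Cons by (simp add: reduce_append)
  finally show ?case by (simp add: reduce_append)
qed (simp add: reduce_seq_def)

lemma foldr_cancel_split:
  assumes "freely_reduced u" "freely_reduced w"
  shows "\<exists>t \<le> length u. t \<le> length w \<and> take t w = inv_word (drop (length u - t) u)
     \<and> foldr cancel u w = take (length u - t) u @ drop t w"
  using assms(1)
proof (induction u)
  case Nil then show ?case by (simp add: inv_word_def)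
next
  case (Cons x u)
  have u: "freely_reduced u" "u \<noteq> [] \<Longrightarrow> hd u \<noteq> inv_letter x"
    using Cons.prems by (auto simp: successively_Cons)
  obtain t where t: "t \<le> length u" "t \<le> length w" "take t w = inv_word (drop (length u - t) u)"
     "foldr cancel u w = take (length u - t) u @ drop t w" using Cons.IH[OF u(1)] by blast
  have step: "foldr cancel (x # u) w = cancel x (take (length u - t) u @ drop t w)" using t(4) by simp
  show ?case
  proof (cases "t < length u")
    case True
    then have "take (length u - t) u \<noteq> []" "hd (take (length u - t) u) = hd u" by (cases u; simp)+
    then have "foldr cancel (x # u) w = x # take (length u - t) u @ drop t w"
      using step u(2) True by (auto simp: cancel_conv)
    moreover have "length (x # u) - t = Suc (length u - t)" using True by simp
    ultimately show ?thesis using t True by (intro exI[of _ t]) auto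
  next
    case False
    then have tu: "t = length u" using t by simp
    show ?thesis
    proof (cases "drop t w \<noteq> [] \<and> hd (drop t w) = inv_letter x")
      case True
      then have tw: "t < length w" and "w ! t = inv_letter x" by (auto simp: hd_drop_conv_nth)
      then have "take (Suc t) w = inv_word (x # u)"
        using t(3) tu by (simp add: take_Suc_conv_app_nth inv_word_Cons)
      moreover have "foldr cancel (x # u) w = drop (Suc t) w"
        using step True tu by (simp add: cancel_conv drop_Suc tl_drop)
      ultimately show ?thesis using tu tw by (intro exI[of _ "Suc t"]) auto
    next
      case False
      then have "foldr cancel (x # u) w = x # drop t w" using step tu by (auto simp: cancel_conv)
      then show ?thesis using tu t by (intro exI[of _ t]) auto
    qed
  qed
qed

lemma take_inv_word_drop:
  assumes "m \<le> t" "t \<le> length u"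
  shows "take m (inv_word (drop (length u - t) u)) = take m (inv_word u)"
proof -
  have "inv_word u = inv_word (drop (length u - t) u) @ inv_word (take (length u - t) u)"
    by (metis append_take_drop_id inv_word_append)
  then show ?thesis using assms by simp
qed

text \<open>Consecutive factors x, y of a freely reduced product of words of S cancel in fewer than m
  letters, since otherwise y would share its prefix of length m with the inverse of x. As
  2m < N, every factor then contributes at least N - 2m letters to the product.\<close>

locale prefix_marked =
  fixes S :: "'a letter list set" and N m :: nat
  assumes freely_reduced_mem: "x \<in> S \<Longrightarrow> freely_reduced x"
    and length_mem: "x \<in> S \<Longrightarrow> length x = N"
    and inv_word_mem: "x \<in> S \<Longrightarrow> inv_word x \<in> S"
    and prefix_determines: "x \<in> S \<Longrightarrow> y \<in> S \<Longrightarrow> take m x = take m y \<Longrightarrow> x = y"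
    and prefix_short: "2 * m < N"
begin

lemma reduce_concat_freely_reduced_seq:
  assumes "s \<noteq> []" "set s \<subseteq> S" "freely_reduced_seq s"
  shows "take m (reduce (concat s)) = take m (hd s)
    \<and> length s * (N - 2 * m) + 2 * m \<le> length (reduce (concat s))"
  using assms
proof (induction s rule: induct_list012)
  case (2 x)
  then show ?case using freely_reduced_mem length_mem prefix_short by (simp add: reduce_eq_self)
next
  case (3 x y s)
  define w where "w = reduce (concat (y # s))"
  have IH: "take m w = take m y" "length (y # s) * (N - 2 * m) + 2 * m \<le> length w"
    using 3 unfolding w_def by auto
  have x: "x \<in> S" "freely_reduced x" "length x = N" and y: "y \<in> S" "y \<noteq> inv_word x"
    using 3 freely_reduced_mem length_mem by auto
  have xw: "reduce (concat (x # y # s)) = foldr cancel x w"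
    by (simp add: w_def reduce_append del: concat.simps) (simp add: reduce_append)
  obtain t where t: "t \<le> length x" "t \<le> length w" "take t w = inv_word (drop (length x - t) x)"
     "foldr cancel x w = take (length x - t) x @ drop t w"
    using foldr_cancel_split[OF x(2) freely_reduced_reduce] unfolding w_def by blast
  have "t < m"
  proof (rule ccontr)
    assume "\<not> t < m"
    then have "take m w = take m (inv_word x)"
      using t take_inv_word_drop[of m t x] by (metis min.absorb1 not_less take_take)
    then have "y = inv_word x" using IH(1) prefix_determines inv_word_mem x(1) y(1) by metis
    then show False using y(2) by simp
  qed
  then have "take m (foldr cancel x w) = take m x" using t x(3) prefix_short by simp
  moreover have "length (foldr cancel x w) = N - t + (length w - t)" using t x(3) by simp
  ultimately show ?case using xw IH \<open>t < m\<close> prefix_short by (auto simp: algebra_simps)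
qed simp

lemma short_element_mem:
  assumes "G \<subseteq> S" "G \<subseteq> reduced_words A" "w \<in> generate (free_group A) G"
    and "w \<noteq> []" "length w \<le> N"
  shows "w \<in> S"
proof -
  obtain \<sigma> where \<sigma>: "set \<sigma> \<subseteq> G \<union> inv_word ` G" "w = reduce (concat \<sigma>)"
    using generate_free_group_elem[OF assms(2,3)] by blast
  define s where "s = reduce_seq \<sigma>"
  have s: "set s \<subseteq> S" "freely_reduced_seq s" "w = reduce (concat s)"
    using \<sigma> assms(1) inv_word_mem set_reduce_seq_subset[of \<sigma>]
    by (auto simp: s_def freely_reduced_seq_reduce_seq reduce_concat_reduce_seq)
  have "s \<noteq> []" using s(3) assms(4) by (auto simp: reduce_def)
  then have bound: "length s * (N - 2 * m) + 2 * m \<le> N"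
    using reduce_concat_freely_reduced_seq[of s] s assms(5) by auto
  have "length s < 2"
  proof (rule ccontr)
    assume "\<not> length s < 2"
    then have "2 * (N - 2 * m) \<le> length s * (N - 2 * m)" by (intro mult_right_mono) auto
    then show False using bound prefix_short by linarith
  qed
  with \<open>s \<noteq> []\<close> obtain x where "s = [x]" by (cases s; cases "tl s") auto
  then show ?thesis using s freely_reduced_mem by (auto simp: reduce_eq_self)
qed

end

section \<open>Counting reduced words\<close>

definition reduced_words_len :: "'a set \<Rightarrow> nat \<Rightarrow> 'a letter list set" where
  "reduced_words_len A l = {w. reduced A w \<and> length w = l}"

lemma finite_reduced_words_le: "finite A \<Longrightarrow> finite (reduced_words_le A n)"
proof (rule finite_subset)
  show "reduced_words_le A n \<subseteq> {w. set w \<subseteq> A \<times> UNIV \<and> length w \<le> n}"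
    by (auto simp: reduced_words_le_def reduced_def)
qed (simp add: finite_lists_length_le)

lemma finite_reduced_words_len: "finite A \<Longrightarrow> finite (reduced_words_len A l)"
  by (rule finite_subset[OF _ finite_reduced_words_le[of A l]])
     (auto simp: reduced_words_len_def reduced_words_le_def)

lemma tuples_le_eq_lists: "tuples_le A k n = {hs. set hs \<subseteq> reduced_words_le A n \<and> length hs = k}"
  by (auto simp: tuples_le_def)

lemma finite_tuples_le: "finite A \<Longrightarrow> finite (tuples_le A k n)"
  unfolding tuples_le_eq_lists by (intro finite_lists_length_eq finite_reduced_words_le)

lemma card_tuples_le: "finite A \<Longrightarrow> card (tuples_le A k n) = card (reduced_words_le A n) ^ k"
  unfolding tuples_le_eq_lists by (intro card_lists_length_eq finite_reduced_words_le)

lemma freely_reduced_if_positive: "(\<And>x. x \<in> set w \<Longrightarrow> snd x) \<Longrightarrow> freely_reduced w"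
proof (induction w)
  case (Cons x w)
  have "snd x" using Cons.prems by simp
  moreover have "w \<noteq> [] \<Longrightarrow> snd (hd w)" using Cons.prems[of "hd w"] by simp
  ultimately have "w \<noteq> [] \<Longrightarrow> hd w \<noteq> inv_letter x" by (metis snd_inv_letter)
  then show ?case using Cons by (auto simp: successively_Cons)
qed simp

lemma card_reduced_words_len_Suc_le:
  assumes "finite A"
  shows "card (reduced_words_len A (Suc l)) \<le> 2 * card A * card (reduced_words_len A l)"
proof -
  let ?snoc = "\<lambda>(w, x). w @ [x]"
  have "reduced_words_len A (Suc l) \<subseteq> ?snoc ` (reduced_words_len A l \<times> (A \<times> UNIV))"
  proof
    fix w assume w: "w \<in> reduced_words_len A (Suc l)"
    then have "w \<noteq> []" by (auto simp: reduced_words_len_def)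
    then have w_eq: "w = butlast w @ [last w]" by simp
    have "freely_reduced (butlast w @ [last w])" "fst ` set (butlast w @ [last w]) \<subseteq> A"
      using w w_eq by (auto simp: reduced_words_len_def reduced_iff_freely_reduced)
    then have "butlast w \<in> reduced_words_len A l" "last w \<in> A \<times> UNIV"
      using w by (auto simp: reduced_words_len_def reduced_iff_freely_reduced successively_append_iff
          mem_Times_iff)
    then show "w \<in> ?snoc ` (reduced_words_len A l \<times> (A \<times> UNIV))"
      using w_eq by (auto intro!: image_eqI[of _ _ "(butlast w, last w)"])
  qed
  then have "card (reduced_words_len A (Suc l))
      \<le> card (?snoc ` (reduced_words_len A l \<times> (A \<times> UNIV)))"
    using assms finite_reduced_words_len[OF assms] by (intro card_mono) auto
  also have "\<dots> \<le> card (reduced_words_len A l \<times> (A \<times> (UNIV :: bool set)))"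
    by (rule card_image_le) (use assms finite_reduced_words_len[OF assms] in auto)
  also have "\<dots> = 2 * card A * card (reduced_words_len A l)" by (simp add: card_cartesian_product)
  finally show ?thesis .
qed

lemma card_reduced_words_len_add_le:
  assumes "finite A"
  shows "card (reduced_words_len A (l + d)) \<le> (2 * card A) ^ d * card (reduced_words_len A l)"
proof (induction d)
  case (Suc d)
  have "card (reduced_words_len A (l + Suc d)) \<le> 2 * card A * card (reduced_words_len A (l + d))"
    using card_reduced_words_len_Suc_le[OF assms] by simp
  also have "\<dots> \<le> 2 * card A * ((2 * card A) ^ d * card (reduced_words_len A l))"
    using Suc by simp
  finally show ?case by (simp add: algebra_simps)
qed simp

text \<open>Appending a letter of the same sign as the last one never cancels, and a, b give two
  such letters.\<close>

lemma two_mult_card_reduced_words_len_le: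
  assumes "finite A" "a \<in> A" "b \<in> A" "a \<noteq> b"
  shows "2 * card (reduced_words_len A l) \<le> card (reduced_words_len A (Suc l))"
proof -
  define ext where "ext = (\<lambda>(w, i). w @ [(if i then a else b, w = [] \<or> snd (last w))])"
  have "inj_on ext (reduced_words_len A l \<times> UNIV)"
    using assms(4) by (auto simp: inj_on_def ext_def split: if_splits)
  moreover have "ext (w, i) \<in> reduced_words_len A (Suc l)" if "w \<in> reduced_words_len A l" for w i
    using that assms(2,3)
    by (auto simp: ext_def reduced_words_len_def reduced_iff_freely_reduced successively_append_iff
        inv_letter_def)
  then have "ext ` (reduced_words_len A l \<times> UNIV) \<subseteq> reduced_words_len A (Suc l)" by auto
  ultimately have "card (reduced_words_len A l \<times> (UNIV :: bool set))
      \<le> card (reduced_words_len A (Suc l))"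
    using finite_reduced_words_len[OF assms(1)] by (intro card_inj_on_le) auto
  then show ?thesis by (simp add: card_cartesian_product)
qed

lemma card_reduced_words_le_le:
  assumes "finite A" "a \<in> A" "b \<in> A" "a \<noteq> b"
  shows "card (reduced_words_le A n) \<le> 2 * card (reduced_words_len A n)"
proof (induction n)
  case 0
  have "reduced_words_le A 0 = {[]}" "reduced_words_len A 0 = {[]}"
    by (auto simp: reduced_words_le_def reduced_words_len_def reduced_def)
  then show ?case by simp
next
  case (Suc n)
  have "reduced_words_le A (Suc n) = reduced_words_le A n \<union> reduced_words_len A (Suc n)"
    by (auto simp: reduced_words_le_def reduced_words_len_def)
  then have "card (reduced_words_le A (Suc n))
      \<le> card (reduced_words_le A n) + card (reduced_words_len A (Suc n))"
    by (simp add: card_Un_le)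
  then show ?case using Suc two_mult_card_reduced_words_len_le[OF assms, of n] by linarith
qed

section \<open>Marked generating tuples\<close>

definition marker :: "'a \<Rightarrow> 'a \<Rightarrow> nat \<Rightarrow> nat \<Rightarrow> 'a letter list" where
  "marker a b k j = replicate j (a, True) @ replicate (k - j) (b, True)"

definition pad :: "'a \<Rightarrow> 'a \<Rightarrow> 'a letter \<Rightarrow> 'a letter" where
  "pad a b c = (if c = (a, False) then (b, True) else (a, True))"

text \<open>The padding letters cancel neither with h nor with the markers. Markers consist of positive
  letters, so the prefix of length k of a marked word identifies it and tells it apart from the
  inverses of marked words.\<close>

definition marked_word :: "'a \<Rightarrow> 'a \<Rightarrow> nat \<Rightarrow> nat \<Rightarrow> 'a letter list \<Rightarrow> 'a letter list" where
  "marked_word a b k j h =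
     marker a b k j @ [pad a b (hd h)] @ h @ [pad a b (last h)] @ marker a b k j"

definition marked_tuple :: "'a \<Rightarrow> 'a \<Rightarrow> nat \<Rightarrow> 'a letter list list \<Rightarrow> 'a letter list list" where
  "marked_tuple a b k hs = map (\<lambda>j. marked_word a b k j (hs ! j)) [0..<k]"

lemma length_marker [simp]: "j \<le> k \<Longrightarrow> length (marker a b k j) = k"
  by (simp add: marker_def)

lemma snd_marker: "x \<in> set (marker a b k j) \<Longrightarrow> snd x"
  by (auto simp: marker_def)

lemma fst_marker: "x \<in> set (marker a b k j) \<Longrightarrow> fst x \<in> {a, b}"
  by (auto simp: marker_def)

lemma marker_inj:
  assumes "a \<noteq> b" "i \<le> k" "j \<le> k" "marker a b k i = marker a b k j"
  shows "i = j"
proof -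
  have "length (filter ((=) (a, True)) (marker a b k j)) = j" if "j \<le> k" for j
    using assms(1) that by (simp add: marker_def filter_replicate)
  then show ?thesis using assms by metis
qed

lemma marker_ne_inv_word:
  assumes "1 \<le> k"
  shows "marker a b k i \<noteq> inv_word (marker a b k j)"
proof
  assume eq: "marker a b k i = inv_word (marker a b k j)"
  have "marker a b k i \<noteq> []" using assms by (auto simp: marker_def)
  then obtain x where x: "x \<in> set (marker a b k i)" by (meson list.set_sel(1))
  then have "snd x" by (rule snd_marker)
  moreover have "x \<in> inv_letter ` set (marker a b k j)" using x eq by (simp add: set_inv_word)
  then have "\<not> snd x" using snd_marker by fastforce
  ultimately show False by simp
qed

lemma snd_pad: "snd (pad a b c)"
  by (simp add: pad_def)

lemma pad_ne_inv_letter: "a \<noteq> b \<Longrightarrow> pad a b c \<noteq> inv_letter c"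
  by (cases c) (auto simp: pad_def inv_letter_def)

lemma ne_inv_letter_if_positive: "snd x \<Longrightarrow> snd y \<Longrightarrow> y \<noteq> inv_letter x"
  by (auto simp: inv_letter_def)

lemma freely_reduced_marked_word:
  assumes "a \<noteq> b" "freely_reduced h"
  shows "freely_reduced (marked_word a b k j h)"
proof -
  define p q where "p = pad a b (hd h)" and "q = pad a b (last h)"
  have q: "snd q" "q \<noteq> inv_letter (last h)"
    using pad_ne_inv_letter[OF assms(1)] by (auto simp: q_def snd_pad)
  have p: "snd p" "hd h \<noteq> inv_letter p"
  proof -
    show "snd p" by (simp add: p_def snd_pad)
    show "hd h \<noteq> inv_letter p"
    proof
      assume "hd h = inv_letter p"
      then have "p = inv_letter (hd h)" by simp
      then show False using pad_ne_inv_letter[OF assms(1), of "hd h"] by (simp add: p_def)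
    qed
  qed
  define M where "M = marker a b k j"
  have X: "freely_reduced ([p] @ h @ [q])"
    using p q assms(2) ne_inv_letter_if_positive[of p q]
    by (cases "h = []") (auto simp: successively_Cons successively_append_iff)
  have "freely_reduced M"
    unfolding M_def by (rule freely_reduced_if_positive) (rule snd_marker)
  moreover have "M \<noteq> [] \<Longrightarrow> snd (hd M) \<and> snd (last M)"
    unfolding M_def by (meson snd_marker hd_in_set last_in_set)
  ultimately have M: "freely_reduced M" "M \<noteq> [] \<Longrightarrow> snd (hd M) \<and> snd (last M)" .
  have "freely_reduced (([p] @ h @ [q]) @ M)"
    unfolding successively_append_iff[of _ "[p] @ h @ [q]" M]
    using X M q(1) ne_inv_letter_if_positive[of q "hd M"] by auto
  then have "freely_reduced (M @ ([p] @ h @ [q]) @ M)"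
    unfolding successively_append_iff[of _ M "([p] @ h @ [q]) @ M"]
    using M p(1) ne_inv_letter_if_positive[of "last M" p] by auto
  then show ?thesis by (simp add: marked_word_def M_def p_def q_def)
qed

lemma take_marked_word: "j \<le> k \<Longrightarrow> take k (marked_word a b k j h) = marker a b k j"
  by (simp add: marked_word_def)

lemma take_inv_word_marked_word:
  assumes "j \<le> k"
  shows "take k (inv_word (marked_word a b k j h)) = inv_word (marker a b k j)"
proof -
  have "marked_word a b k j h
      = (marker a b k j @ [pad a b (hd h)] @ h @ [pad a b (last h)]) @ marker a b k j"
    by (simp add: marked_word_def)
  then show ?thesis using assms by (simp only: inv_word_append) simp
qed

lemma length_marked_word: "j \<le> k \<Longrightarrow> length (marked_word a b k j h) = 2 * k + 2 + length h"
  by (simp add: marked_word_def)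

lemma inner_marked_word: "j \<le> k \<Longrightarrow> take (length h) (drop (Suc k) (marked_word a b k j h)) = h"
  by (simp add: marked_word_def)

lemma set_marked_tuple: "set (marked_tuple a b k hs) = (\<lambda>j. marked_word a b k j (hs ! j)) ` {..<k}"
  by (auto simp: marked_tuple_def)

locale two_letters =
  fixes A :: "'a set" and a b :: 'a
  assumes a_ne_b: "a \<noteq> b" and a_mem: "a \<in> A" and b_mem: "b \<in> A"
begin

lemma reduced_marked_word:
  assumes "reduced A h"
  shows "reduced A (marked_word a b k j h)"
proof -
  have "freely_reduced (marked_word a b k j h)"
    using assms freely_reduced_marked_word[OF a_ne_b] by (simp add: reduced_iff_freely_reduced)
  moreover have "fst (pad a b c) \<in> A" for c using a_mem b_mem by (simp add: pad_def)
  moreover have "fst x \<in> A" if "x \<in> set (marker a b k j)" for x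
    using fst_marker[OF that] a_mem b_mem by auto
  ultimately show ?thesis
    using assms by (auto simp: reduced_iff_freely_reduced marked_word_def simp del: successively.simps)
qed

lemma marked_tuple_mem_tuples_le:
  assumes "set hs \<subseteq> reduced_words_len A L" "length hs = k"
  shows "marked_tuple a b k hs \<in> tuples_le A k (2 * k + 2 + L)"
proof -
  have "hs ! j \<in> reduced_words_len A L" if "j < k" for j using assms that by auto
  then show ?thesis
    by (auto simp: tuples_le_def reduced_words_le_def marked_tuple_def reduced_words_len_def
        reduced_marked_word length_marked_word)
qed

lemma prefix_marked_marked_tuple:
  assumes "1 \<le> k" "set hs \<subseteq> reduced_words_len A L" "length hs = k"
  defines "G \<equiv> set (marked_tuple a b k hs)"
  shows "prefix_marked (G \<union> inv_word ` G) (2 * k + 2 + L) k"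
proof
  define w where "w j = marked_word a b k j (hs ! j)" for j
  have G: "G = w ` {..<k}" by (simp add: G_def w_def set_marked_tuple)
  have hs: "j < k \<Longrightarrow> reduced A (hs ! j) \<and> length (hs ! j) = L" for j
  proof -
    assume "j < k"
    then have "hs ! j \<in> reduced_words_len A L" using assms(2,3) nth_mem by blast
    then show ?thesis by (simp add: reduced_words_len_def)
  qed
  have prefix: "\<exists>j<k. x = w j \<and> take k x = marker a b k j
      \<or> x = inv_word (w j) \<and> take k x = inv_word (marker a b k j)" if "x \<in> G \<union> inv_word ` G" for x
    using that by (auto simp: G w_def take_marked_word take_inv_word_marked_word)
  fix x assume x: "x \<in> G \<union> inv_word ` G"
  then obtain j where "j < k" "x = w j \<or> x = inv_word (w j)" unfolding G by blast
  then show "freely_reduced x" "length x = 2 * k + 2 + L"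
    using hs freely_reduced_marked_word[OF a_ne_b]
    by (auto simp: w_def reduced_iff_freely_reduced freely_reduced_inv_word length_marked_word)
  show "inv_word x \<in> G \<union> inv_word ` G" using x by auto
  fix y assume y: "y \<in> G \<union> inv_word ` G" and xy: "take k x = take k y"
  obtain i where i: "i < k" "x = w i \<and> take k x = marker a b k i
      \<or> x = inv_word (w i) \<and> take k x = inv_word (marker a b k i)" using prefix[OF x] by blast
  obtain j where j: "j < k" "y = w j \<and> take k y = marker a b k j
      \<or> y = inv_word (w j) \<and> take k y = inv_word (marker a b k j)" using prefix[OF y] by blast
  show "x = y"
    using i j xy marker_inj[OF a_ne_b, of i k j]
    by (auto simp: marker_ne_inv_word[OF assms(1)] marker_ne_inv_word[OF assms(1), THEN not_sym])
qed simp

lemma inj_on_gen_sub_marked_tuple: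
  assumes "1 \<le> k"
  shows "inj_on (\<lambda>hs. gen_sub A (marked_tuple a b k hs))
    {hs. set hs \<subseteq> reduced_words_len A L \<and> length hs = k}"
proof (rule inj_onI)
  fix hs hs'
  assume "hs \<in> {hs. set hs \<subseteq> reduced_words_len A L \<and> length hs = k}"
    and "hs' \<in> {hs. set hs \<subseteq> reduced_words_len A L \<and> length hs = k}"
  then have hs: "set hs \<subseteq> reduced_words_len A L" "length hs = k"
    and hs': "set hs' \<subseteq> reduced_words_len A L" "length hs' = k" by simp_all
  assume eq: "gen_sub A (marked_tuple a b k hs) = gen_sub A (marked_tuple a b k hs')"
  define G where "G = set (marked_tuple a b k hs)"
  interpret prefix_marked "G \<union> inv_word ` G" "2 * k + 2 + L" k
    unfolding G_def by (rule prefix_marked_marked_tuple[OF assms hs])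
  have G_reduced: "G \<subseteq> reduced_words A"
    using marked_tuple_mem_tuples_le[OF hs]
    by (auto simp: G_def tuples_le_def reduced_words_le_def reduced_words_def)
  have "hs ! j = hs' ! j" if j: "j < k" for j
  proof -
    define w where "w = marked_word a b k j (hs' ! j)"
    have "hs ! j \<in> reduced_words_len A L" "hs' ! j \<in> reduced_words_len A L"
      using hs hs' j by (simp_all add: subsetD)
    then have len: "length (hs ! j) = L" "length (hs' ! j) = L"
      by (simp_all add: reduced_words_len_def)
    have "w \<in> set (marked_tuple a b k hs')" using j by (auto simp: w_def set_marked_tuple)
    then have "w \<in> gen_sub A (marked_tuple a b k hs')" unfolding gen_sub_def by (rule generate.incl)
    then have "w \<in> generate (free_group A) G" using eq by (simp add: G_def gen_sub_def)
    moreover have "length w = 2 * k + 2 + L" using j len by (simp add: w_def length_marked_word)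
    ultimately have "w \<in> G \<union> inv_word ` G"
      by (intro short_element_mem[OF _ G_reduced]) auto
    moreover have "marked_word a b k j (hs ! j) \<in> G \<union> inv_word ` G"
      using j by (auto simp: G_def set_marked_tuple)
    moreover have "take k w = take k (marked_word a b k j (hs ! j))"
      using j by (simp add: w_def take_marked_word)
    ultimately have "w = marked_word a b k j (hs ! j)" by (rule prefix_determines)
    then have "take L (drop (Suc k) w) = take L (drop (Suc k) (marked_word a b k j (hs ! j)))"
      by simp
    then show ?thesis
      using inner_marked_word[of j k "hs ! j"] inner_marked_word[of j k "hs' ! j"] j len
      by (simp add: w_def)
  qed
  then show "hs = hs'" using hs(2) hs'(2) by (simp add: list_eq_iff_nth_eq)
qed

lemma card_reduced_words_len_pow_le:
  assumes "finite A" "1 \<le> k"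
  shows "card (reduced_words_len A L) ^ k \<le> card (subgroups_T_le A k (2 * k + 2 + L))"
proof -
  let ?H = "{hs. set hs \<subseteq> reduced_words_len A L \<and> length hs = k}"
  have "card (reduced_words_len A L) ^ k = card ?H"
    by (simp add: card_lists_length_eq finite_reduced_words_len[OF assms(1)])
  also have "\<dots> = card ((\<lambda>hs. gen_sub A (marked_tuple a b k hs)) ` ?H)"
    using inj_on_gen_sub_marked_tuple[OF assms(2)] by (simp add: card_image)
  also have "\<dots> \<le> card (subgroups_T_le A k (2 * k + 2 + L))"
    using marked_tuple_mem_tuples_le finite_tuples_le[OF assms(1)]
    by (intro card_mono) (auto simp: subgroups_T_le_def)
  finally show ?thesis .
qed

end

section \<open>Comparing the two uniform laws\<close>

lemma finite_subgroups_T_le: "finite A \<Longrightarrow> finite (subgroups_T_le A k n)"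
  unfolding subgroups_T_le_def by (intro finite_imageI finite_tuples_le)

lemma tuples_le_nonempty: "tuples_le A k n \<noteq> {}"
proof -
  have "replicate k [] \<in> tuples_le A k n"
    by (auto simp: tuples_le_def reduced_words_le_def reduced_def)
  then show ?thesis by blast
qed

lemma tuples_le_subset_tuples: "tuples_le A k n \<subseteq> tuples A k"
  by (auto simp: tuples_le_def tuples_def reduced_words_le_def reduced_words_def)

lemma subgroups_T_le_nonempty: "subgroups_T_le A k n \<noteq> {}"
  using tuples_le_nonempty by (simp add: subgroups_T_le_def)

lemma card_tuples_le_le_card_subgroups_T_le:
  assumes "finite A" "card A \<ge> 2" "k \<ge> 1"
  obtains C where
    "\<And>n. n \<ge> 2 * k + 2 \<Longrightarrow> real (card (tuples_le A k n)) \<le> C * real (card (subgroups_T_le A k n))"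
proof -
  obtain a where "a \<in> A" using assms(2) by fastforce
  moreover have "A - {a} \<noteq> {}"
    using assms(1,2) \<open>a \<in> A\<close> by (metis card_Diff_singleton card.empty Suc_1 diff_is_0_eq
        not_less_eq_eq)
  ultimately obtain b where ab: "a \<in> A" "b \<in> A" "a \<noteq> b" by blast
  interpret two_letters A a b by unfold_locales (use ab in auto)
  define D where "D = 2 * k + 2"
  define q where "q = 2 * card A"
  have "card (tuples_le A k n) \<le> (2 * q ^ D) ^ k * card (subgroups_T_le A k n)" if "n \<ge> D" for n
  proof -
    define L where "L = n - D"
    have n: "n = L + D" using that by (simp add: L_def)
    have "card (tuples_le A k n) = card (reduced_words_le A n) ^ k"
      by (rule card_tuples_le[OF assms(1)])
    also have "\<dots> \<le> (2 * card (reduced_words_len A n)) ^ k"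
      by (rule power_mono[OF card_reduced_words_le_le[OF assms(1) ab]]) simp
    also have "\<dots> \<le> (2 * (q ^ D * card (reduced_words_len A L))) ^ k"
      using card_reduced_words_len_add_le[OF assms(1), of L D] n by (simp add: q_def power_mono)
    also have "\<dots> = (2 * q ^ D) ^ k * card (reduced_words_len A L) ^ k"
      by (simp add: power_mult_distrib mult.assoc)
    also have "\<dots> \<le> (2 * q ^ D) ^ k * card (subgroups_T_le A k n)"
      using card_reduced_words_len_pow_le[OF assms(1,3), of L] n by (simp add: D_def add.commute)
    finally show ?thesis .
  qed
  then show ?thesis
    by (intro that[of "real ((2 * q ^ D) ^ k)"]) (simp flip: of_nat_mult add: D_def)
qed

lemma card_image_ratio_le:
  assumes "finite U" "U \<noteq> {}" "real (card U) \<le> C * real (card (g ` U))"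
  shows "real (card (Z \<inter> g ` U)) / real (card (g ` U))
    \<le> C * (real (card {u \<in> U. g u \<in> Z}) / real (card U))"
proof -
  have "Z \<inter> g ` U = g ` {u \<in> U. g u \<in> Z}" by auto
  then have "card (Z \<inter> g ` U) \<le> card {u \<in> U. g u \<in> Z}"
    using assms(1) by (simp add: card_image_le)
  moreover have "0 < card (g ` U)" "0 < card U" using assms(1,2) by (simp_all add: card_gt_0_iff)
  ultimately have "real (card (Z \<inter> g ` U)) / card (g ` U)
      \<le> real (card {u \<in> U. g u \<in> Z}) * card U / (card (g ` U) * card U)"
    by (simp add: divide_right_mono)
  also have "\<dots> \<le> real (card {u \<in> U. g u \<in> Z}) * (C * card (g ` U)) / (card (g ` U) * card U)"
    using assms(3) by (intro divide_right_mono mult_left_mono) auto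
  also have "\<dots> = C * (real (card {u \<in> U. g u \<in> Z}) / card U)"
    using \<open>0 < card (g ` U)\<close> by (simp add: field_simps)
  finally show ?thesis .
qed

lemma one_minus_card_ratio:
  assumes "finite T" "T \<noteq> {}"
  shows "1 - real (card (X \<inter> T)) / real (card T) = real (card (- X \<inter> T)) / real (card T)"
proof -
  have "card T = card (X \<inter> T) + card (- X \<inter> T)"
    using assms(1) by (subst card_Un_disjoint[symmetric]) (auto intro: arg_cong[where f = card])
  moreover have "real (card T) \<noteq> 0" using assms by simp
  then have "1 - real (card (X \<inter> T)) / real (card T) = (real (card T) - card (X \<inter> T)) / card T"
    by (simp add: diff_divide_distrib)
  ultimately show ?thesis by simp
qed

lemma Qn_nonneg: "0 \<le> Qn A k n X"
  by (simp add: Qn_def)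

lemma one_minus_Qn: "finite A \<Longrightarrow> 1 - Qn A k n X = Qn A k n (- X)"
  unfolding Qn_def
  by (rule one_minus_card_ratio[OF finite_subgroups_T_le subgroups_T_le_nonempty])

lemma one_minus_Pn_preimage:
  assumes "finite A"
  shows "1 - Pn A k n {hs \<in> tuples A k. gen_sub A hs \<in> X}
    = Pn A k n {hs \<in> tuples A k. gen_sub A hs \<in> - X}"
proof -
  have "- {hs \<in> tuples A k. gen_sub A hs \<in> X} \<inter> tuples_le A k n
      = {hs \<in> tuples A k. gen_sub A hs \<in> - X} \<inter> tuples_le A k n"
    using tuples_le_subset_tuples by auto
  then show ?thesis
    unfolding Pn_def using one_minus_card_ratio[OF finite_tuples_le[OF assms] tuples_le_nonempty]
    by metis
qed

lemma Qn_dominated_by_Pn: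
  assumes "finite A" "card A \<ge> 2" "k \<ge> 1"
  obtains C where
    "\<And>X. \<forall>\<^sub>F n in sequentially. Qn A k n X \<le> C * Pn A k n {hs \<in> tuples A k. gen_sub A hs \<in> X}"
proof -
  obtain C where C: "\<And>n. n \<ge> 2 * k + 2
      \<Longrightarrow> real (card (tuples_le A k n)) \<le> C * real (card (subgroups_T_le A k n))"
    using card_tuples_le_le_card_subgroups_T_le[OF assms] by blast
  have "{hs \<in> tuples A k. gen_sub A hs \<in> X} \<inter> tuples_le A k n
      = {hs \<in> tuples_le A k n. gen_sub A hs \<in> X}" for X n
    using tuples_le_subset_tuples by auto
  then have dom: "Qn A k n X \<le> C * Pn A k n {hs \<in> tuples A k. gen_sub A hs \<in> X}"
    if "n \<ge> 2 * k + 2" for X n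
    unfolding Qn_def Pn_def subgroups_T_le_def
    using card_image_ratio_le[OF finite_tuples_le[OF assms(1)] tuples_le_nonempty
        C[OF that, unfolded subgroups_T_le_def]]
    by (simp add: subgroups_T_le_def)
  show ?thesis
    by (rule that, rule eventually_sequentiallyI[of "2 * k + 2"], rule dom)
qed

lemma tendsto_zero_if_eventually_dominated:
  fixes f g :: "nat \<Rightarrow> real"
  assumes "\<forall>\<^sub>F n in sequentially. 0 \<le> g n \<and> g n \<le> C * f n" "f \<longlonglongrightarrow> 0"
  shows "g \<longlonglongrightarrow> 0"
proof (rule tendsto_sandwich[OF _ _ tendsto_const])
  show "(\<lambda>n. C * f n) \<longlonglongrightarrow> 0" using assms(2) by (rule tendsto_mult_right_zero)
qed (use assms(1) in \<open>auto elim: eventually_mono\<close>)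

lemma exp_decay_if_eventually_dominated:
  fixes f g :: "nat \<Rightarrow> real"
  assumes "\<forall>\<^sub>F n in sequentially. 0 \<le> g n \<and> g n \<le> C * f n"
    and "\<exists>c>0. f \<in> O(\<lambda>n. exp (- c * real n))"
  shows "\<exists>c>0. g \<in> O(\<lambda>n. exp (- c * real n))"
proof -
  have "g \<in> O(f)"
  proof (rule bigoI[of _ "\<bar>C\<bar>"])
    show "\<forall>\<^sub>F n in sequentially. norm (g n) \<le> \<bar>C\<bar> * norm (f n)"
    proof (rule eventually_mono[OF assms(1)], clarify)
      fix n assume "0 \<le> g n" "g n \<le> C * f n"
      moreover have "C * f n \<le> \<bar>C\<bar> * \<bar>f n\<bar>" by (metis abs_ge_self abs_mult)
      ultimately show "norm (g n) \<le> \<bar>C\<bar> * norm (f n)" by simp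
    qed
  qed
  then show ?thesis using assms(2) landau_o.big_trans by blast
qed

lemma tendsto_one_iff_one_minus: "(\<lambda>n. 1 - f n) \<longlonglongrightarrow> 0 \<longleftrightarrow> f \<longlonglongrightarrow> (1 :: real)"
proof -
  have "(\<lambda>n. 1 - f n) \<longlonglongrightarrow> 0 \<longleftrightarrow> (\<lambda>n. f n - 1) \<longlonglongrightarrow> 0"
    using tendsto_minus_cancel_left[of "\<lambda>n. 1 - f n" 0 sequentially] by simp
  then show ?thesis by (simp add: LIM_zero_iff)
qed

theorem mainTheorem4:
  fixes A :: "'a set" and k :: nat and X :: "'a letter list set set"
  assumes "finite A" and "card A \<ge> 2" and "k \<ge> 1"
    and "X \<subseteq> subgroups_T A k"
  defines "Y \<equiv> {hs \<in> tuples A k. gen_sub A hs \<in> X}"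
  shows "((\<lambda>n. Pn A k n Y) \<longlonglongrightarrow> 0 \<longrightarrow> (\<lambda>n. Qn A k n X) \<longlonglongrightarrow> 0)
    \<and> ((\<exists>c>0. (\<lambda>n. Pn A k n Y) \<in> O(\<lambda>n. exp (- c * real n))) \<longrightarrow>
         (\<exists>c'>0. (\<lambda>n. Qn A k n X) \<in> O(\<lambda>n. exp (- c' * real n))))
    \<and> ((\<lambda>n. Pn A k n Y) \<longlonglongrightarrow> 1 \<longrightarrow> (\<lambda>n. Qn A k n X) \<longlonglongrightarrow> 1)
    \<and> ((\<exists>c>0. (\<lambda>n. 1 - Pn A k n Y) \<in> O(\<lambda>n. exp (- c * real n))) \<longrightarrow>
         (\<exists>c'>0. (\<lambda>n. 1 - Qn A k n X) \<in> O(\<lambda>n. exp (- c' * real n))))"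
proof -
  obtain C where dom: "\<And>Z. \<forall>\<^sub>F n in sequentially.
      Qn A k n Z \<le> C * Pn A k n {hs \<in> tuples A k. gen_sub A hs \<in> Z}"
    using Qn_dominated_by_Pn[OF assms(1-3)] by blast
  have Q: "\<forall>\<^sub>F n in sequentially. 0 \<le> Qn A k n X \<and> Qn A k n X \<le> C * Pn A k n Y"
    using dom[of X] by (rule eventually_mono) (simp add: Y_def Qn_nonneg)
  have Q': "\<forall>\<^sub>F n in sequentially. 0 \<le> 1 - Qn A k n X \<and> 1 - Qn A k n X \<le> C * (1 - Pn A k n Y)"
    using dom[of "- X"] by (rule eventually_mono)
      (simp add: Y_def Qn_nonneg one_minus_Qn one_minus_Pn_preimage assms(1))
  show ?thesis
    using tendsto_zero_if_eventually_dominated[OF Q] tendsto_zero_if_eventually_dominated[OF Q']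
      exp_decay_if_eventually_dominated[OF Q] exp_decay_if_eventually_dominated[OF Q']
    by (simp only: tendsto_one_iff_one_minus[symmetric]) blast
qed

end
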